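(* Let $R$ be an associative ring with identity and let $e_1, e_2$ be idempotents of $R$ with $e_1 \sim_i e_2$. Then there is an automorphism of $R$ sending $e_1$ to $e_2$.
   Context: Let $\gamma(R)$ be the directed graph whose vertices are the idempotents of $R$, with an edge $f \to g$ if and only if $fg = 0$; $f$ is then called an in-neighbour of $g$. For idempotents $e, e'$, write $e \sim_i e'$ if they have the same set of in-neighbours in $\gamma(R)$, i.e. for every idempotent $f \in R$, $fe = 0 \iff fe' = 0$. *)

theory Defs
  imports Main
begin

definition idempotent :: "'a::ring_1 \<Rightarrow> bool" where
  "idempotent e \<longleftrightarrow> e * e = e"

text \<open>Edge f -> g in the directed idempotent graph: f g = 0.
In-neighbours of g: idempotents f with f g = 0.\<close>
definition in_neighbours :: "'a::ring_1 \<Rightarrow> 'a set" where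
  "in_neighbours g = {f. idempotent f \<and> f * g = 0}"

definition in_equiv :: "'a::ring_1 \<Rightarrow> 'a \<Rightarrow> bool" where
  "in_equiv e e' \<longleftrightarrow> in_neighbours e = in_neighbours e'"

definition ring_automorphism :: "('a::ring_1 \<Rightarrow> 'a) \<Rightarrow> bool" where
  "ring_automorphism \<phi> \<longleftrightarrow> bij \<phi> \<and> (\<forall>x y. \<phi> (x + y) = \<phi> x + \<phi> y)
     \<and> (\<forall>x y. \<phi> (x * y) = \<phi> x * \<phi> y) \<and> \<phi> 1 = 1"

end

theory Submission
  imports Defs
begin

text \<open>Since \<open>1 - e\<close> is an in-neighbour of \<open>e\<close>, in-equivalent idempotents \<open>e\<^sub>1, e\<^sub>2\<close> satisfy
  \<open>e\<^sub>1 e\<^sub>2 = e\<^sub>2\<close> and \<open>e\<^sub>2 e\<^sub>1 = e\<^sub>1\<close>. Then \<open>a = e\<^sub>2 - e\<^sub>1\<close> has square zero, so \<open>1 + a\<close> is a unit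
  with inverse \<open>1 - a\<close>, and conjugation by it maps \<open>e\<^sub>1\<close> to \<open>e\<^sub>1 + a = e\<^sub>2\<close>.\<close>

lemma idempotent_one_minus:
  fixes e :: "'a::ring_1"
  assumes "idempotent e"
  shows "idempotent (1 - e)"
  using assms by (simp add: idempotent_def algebra_simps)

lemma one_minus_in_neighbours:
  fixes e :: "'a::ring_1"
  assumes "idempotent e"
  shows "1 - e \<in> in_neighbours e"
  using assms idempotent_one_minus[OF assms]
  by (simp add: in_neighbours_def idempotent_def algebra_simps)

lemma in_equiv_sym: "in_equiv e e' \<Longrightarrow> in_equiv e' e"
  by (simp add: in_equiv_def)

lemma in_equiv_mult_absorb:
  fixes e e' :: "'a::ring_1"
  assumes "idempotent e" and "in_equiv e e'"
  shows "e * e' = e'"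
proof -
  have "1 - e \<in> in_neighbours e'"
    using one_minus_in_neighbours[OF assms(1)] assms(2) by (simp add: in_equiv_def)
  then show ?thesis by (simp add: in_neighbours_def algebra_simps)
qed

lemma square_zero_one_plus_inverse:
  fixes a :: "'a::ring_1"
  assumes "a * a = 0"
  shows "(1 + a) * (1 - a) = 1" and "(1 - a) * (1 + a) = 1"
  using assms by (simp_all add: algebra_simps)

lemma ring_automorphism_conj:
  fixes u v :: "'a::ring_1"
  assumes uv: "u * v = 1" and vu: "v * u = 1"
  shows "ring_automorphism (\<lambda>x. v * x * u)"
proof -
  have inv1: "u * (v * x * u) * v = x" and inv2: "v * (u * x * v) * u = x" for x
  proof -
    have "u * (v * x * u) * v = (u * v) * x * (u * v)" by (simp add: mult.assoc)
    then show "u * (v * x * u) * v = x" by (simp add: uv)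
    have "v * (u * x * v) * u = (v * u) * x * (v * u)" by (simp add: mult.assoc)
    then show "v * (u * x * v) * u = x" by (simp add: vu)
  qed
  have "bij (\<lambda>x. v * x * u)"
    by (rule o_bij[of "\<lambda>x. u * x * v"]) (auto simp: inv1 inv2)
  moreover have "v * (x * y) * u = v * x * u * (v * y * u)" for x y
  proof -
    have "v * x * u * (v * y * u) = v * x * (u * v) * y * u" by (simp add: mult.assoc)
    then show ?thesis by (simp add: uv mult.assoc)
  qed
  ultimately show ?thesis
    using vu by (simp add: ring_automorphism_def algebra_simps)
qed

theorem mainTheorem8:
  fixes e1 e2 :: "'a::ring_1"
  assumes "idempotent e1" and "idempotent e2" and "in_equiv e1 e2"
  shows "\<exists>\<phi>. ring_automorphism \<phi> \<and> \<phi> e1 = e2"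
proof -
  have e11: "e1 * e1 = e1" using assms(1) by (simp add: idempotent_def)
  have e12: "e1 * e2 = e2" using in_equiv_mult_absorb assms(1,3) .
  have e21: "e2 * e1 = e1" using in_equiv_mult_absorb assms(2) in_equiv_sym[OF assms(3)] .
  define a where "a = e2 - e1"
  have "a * a = 0" using e11 e12 e21 assms(2)
    by (simp add: a_def idempotent_def algebra_simps)
  then have "ring_automorphism (\<lambda>x. (1 - a) * x * (1 + a))"
    by (intro ring_automorphism_conj square_zero_one_plus_inverse)
  moreover have "(1 - a) * e1 * (1 + a) = e2"
    using e11 e12 e21 by (simp add: a_def algebra_simps)
  ultimately show ?thesis by blast
qed

end
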